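(* Let $1\le d<n$, let $S\subseteq[n]$ with $|S|=d$, let $J(t)=e_d(t\mathbf{1}+\mathbf{1}_S)$, and let $\lambda$ be the largest root of $J$. Then $J'(\lambda)\ge \dfrac{1}{n^{d(n-d)}}$.
   Context: $e_d(x)=\sum_{T\subseteq[n],|T|=d}\prod_{i\in T}x_i$, $\mathbf{1}=(1,\dots,1)\in\mathbb{R}^n$, and $\mathbf{1}_S$ is the indicator vector of $S$. Equivalently $J(t)=\frac{1}{(n-d)!}\frac{d^{n-d}}{dt^{n-d}}\big[t^{n-d}(t+1)^d\big]$. *)

theory Defs
  imports "HOL-Computational_Algebra.Polynomial"
begin

text \<open>Elementary symmetric polynomial e_d of the vector (x_0, ..., x_{n-1}).
  Indices [n] = {1..n} of the paper are rendered as {0..<n}.\<close>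
definition esym :: "nat \<Rightarrow> nat \<Rightarrow> (nat \<Rightarrow> 'a::comm_semiring_1) \<Rightarrow> 'a" where
  "esym n d x = (\<Sum>T \<in> {T. T \<subseteq> {..<n} \<and> card T = d}. \<Prod>i\<in>T. x i)"

definition Jpoly :: "nat \<Rightarrow> nat \<Rightarrow> nat set \<Rightarrow> real poly" where
  "Jpoly n d S = esym n d (\<lambda>i. [: (if i \<in> S then 1 else 0), 1 :])"

end

theory Submission
  imports Defs
begin

text \<open>
  With \<open>m = n - d\<close>, \<open>J(t) = \<Sum>\<^sub>k C(d,k) C(m+k,k) t\<^sup>k\<close> has nonnegative coefficients and
  constant term 1, and the two-term recurrence of its coefficients gives the differential identity
  \<open>t(t+1) J'(t) + (m-d) t J(t) = (d+1) m F(t)\<close>, where \<open>F\<close> is the primitive of \<open>J\<close> with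
  \<open>F(0) = 0\<close>. Put \<open>B = J(1)\<close> and \<open>\<delta> = 1/(2B)\<close>. Then \<open>J \<ge> 1/2\<close> on \<open>[-\<delta>, 0]\<close> and \<open>J \<ge> 1\<close>
  on \<open>[0, \<infinity>)\<close>, so the largest root \<open>\<lambda>\<close> lies below \<open>-\<delta>\<close>, \<open>J > 0\<close> right of \<open>\<lambda>\<close>, and
  \<open>F(\<lambda>) \<le> F(-\<delta>) \<le> -\<delta>/2\<close>. At \<open>\<lambda>\<close> the identity reads \<open>\<lambda>(\<lambda>+1) J'(\<lambda>) = (d+1) m F(\<lambda>)\<close>; since
  \<open>-\<lambda>(\<lambda>+1) \<le> 1/4\<close> and \<open>J'(\<lambda>) \<ge> 0\<close>, this forces \<open>J'(\<lambda>) \<ge> (d+1) m / B\<close>, and finally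
  \<open>B \<le> 2\<^sup>d C(n,m) \<le> (d+1) m n\<^sup>d\<^sup>m\<close>.
\<close>

lemma card_supersets_of_card:
  assumes "U \<subseteq> A" "finite A" "card U \<le> d"
  shows "card {T. T \<subseteq> A \<and> card T = d \<and> U \<subseteq> T} = (card A - card U) choose (d - card U)"
proof -
  have "finite U" using assms finite_subset by blast
  have "{T. T \<subseteq> A \<and> card T = d \<and> U \<subseteq> T} = (\<lambda>V. V \<union> U) ` {V. V \<subseteq> A - U \<and> card V = d - card U}"
  proof (intro set_eqI iffI)
    fix T assume T: "T \<in> {T. T \<subseteq> A \<and> card T = d \<and> U \<subseteq> T}"
    then have "T = (T - U) \<union> U" "T - U \<subseteq> A - U" "card (T - U) = d - card U"
      using \<open>finite U\<close> by (auto simp: card_Diff_subset)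
    then show "T \<in> (\<lambda>V. V \<union> U) ` {V. V \<subseteq> A - U \<and> card V = d - card U}" by blast
  next
    fix T assume "T \<in> (\<lambda>V. V \<union> U) ` {V. V \<subseteq> A - U \<and> card V = d - card U}"
    then obtain V where V: "V \<subseteq> A - U" "card V = d - card U" and T: "T = V \<union> U" by blast
    have "card T = card V + card U"
      unfolding T using V \<open>finite U\<close> assms(2) by (intro card_Un_disjoint) (auto intro: finite_subset)
    then show "T \<in> {T. T \<subseteq> A \<and> card T = d \<and> U \<subseteq> T}" using V T assms by auto
  qed
  moreover have "inj_on (\<lambda>V. V \<union> U) {V. V \<subseteq> A - U \<and> card V = d - card U}"
    by (rule inj_onI) blast
  ultimately have "card {T. T \<subseteq> A \<and> card T = d \<and> U \<subseteq> T} = card (A - U) choose (d - card U)"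
    using assms(2) by (simp add: card_image n_subsets)
  then show ?thesis using assms \<open>finite U\<close> by (simp add: card_Diff_subset)
qed

lemma sum_Pow_card:
  fixes h :: "nat \<Rightarrow> 'a::comm_semiring_1"
  assumes "finite S"
  shows "(\<Sum>U\<in>Pow S. h (card U)) = (\<Sum>j\<le>card S. of_nat (card S choose j) * h j)"
proof -
  have "(\<Sum>U\<in>Pow S. h (card U)) = (\<Sum>j\<le>card S. \<Sum>U | U \<in> Pow S \<and> card U = j. h (card U))"
    by (rule sum.group[symmetric]) (use assms in \<open>auto intro: card_mono\<close>)
  also have "\<dots> = (\<Sum>j\<le>card S. of_nat (card S choose j) * h j)"
  proof (rule sum.cong[OF refl])
    fix j
    have "{U. U \<in> Pow S \<and> card U = j} = {U. U \<subseteq> S \<and> card U = j}" by auto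
    then show "(\<Sum>U | U \<in> Pow S \<and> card U = j. h (card U)) = of_nat (card S choose j) * h j"
      using n_subsets[OF assms] by simp
  qed
  finally show ?thesis .
qed

lemma prod_indicator_plus:
  fixes t :: "'a::comm_semiring_1"
  assumes "finite T"
  shows "(\<Prod>i\<in>T. (if i \<in> S then 1 else 0) + t) = (\<Sum>U\<in>Pow (T \<inter> S). t ^ (card T - card U))"
proof -
  have indicator: "(\<Prod>i\<in>U. if i \<in> S then 1 else 0 :: 'a) = (if U \<subseteq> S then 1 else 0)"
    if "finite U" for U
    using that by (induction U rule: finite_induct) auto
  have "(\<Prod>i\<in>T. (if i \<in> S then 1 else 0) + t)
      = (\<Sum>U\<in>Pow T. (\<Prod>i\<in>U. if i \<in> S then 1 else 0) * t ^ card (T - U))"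
    by (simp add: prod_add[OF assms])
  also have "\<dots> = (\<Sum>U\<in>Pow T. if U \<subseteq> S then t ^ (card T - card U) else 0)"
    using assms by (intro sum.cong) (auto simp: indicator card_Diff_subset finite_subset)
  also have "\<dots> = (\<Sum>U\<in>Pow (T \<inter> S). t ^ (card T - card U))"
    using assms by (simp add: sum.If_cases) (intro sum.cong; auto)
  finally show ?thesis .
qed

lemma poly_pos_beyond_largest_root:
  fixes p :: "real poly"
  assumes largest: "\<forall>x. poly p x = 0 \<longrightarrow> x \<le> lam"
    and "lam < x0" "0 < poly p x0" "lam < t"
  shows "0 < poly p t"
proof (rule ccontr)
  assume "\<not> 0 < poly p t"
  moreover have "poly p t \<noteq> 0" using largest \<open>lam < t\<close> by force
  ultimately have "poly p t < 0" by simp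
  with \<open>0 < poly p x0\<close> obtain x where "min t x0 < x" "poly p x = 0"
    using poly_IVT_pos[of t x0 p] poly_IVT_neg[of x0 t p]
    by (cases t x0 rule: linorder_cases) auto
  with largest \<open>lam < t\<close> \<open>lam < x0\<close> show False by force
qed

lemma has_real_derivative_nonneg_at_root:
  fixes f :: "real \<Rightarrow> real"
  assumes "(f has_real_derivative D) (at x)" "f x = 0" "\<forall>t>x. 0 < f t"
  shows "0 \<le> D"
proof (rule ccontr)
  assume "\<not> 0 \<le> D"
  then obtain e where "e > 0" "\<forall>h>0. h < e \<longrightarrow> f (x + h) < f x"
    using DERIV_neg_dec_right[OF assms(1)] by auto
  then have "f (x + e / 2) < 0" using assms(2) by simp
  with assms(3)[rule_format, of "x + e / 2"] \<open>e > 0\<close> show False by simp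
qed

lemma pderiv_at_largest_root_ge:
  fixes p :: "real poly" and F :: "real \<Rightarrow> real" and a c B lam :: real
  assumes "0 \<le> a" and "1 \<le> B"
    and F_deriv: "\<And>t. (F has_real_derivative poly p t) (at t)" and "F 0 = 0"
    and ode: "\<And>t. t * (t + 1) * poly (pderiv p) t + c * t * poly p t = a * F t"
    and ge_1: "\<And>t. 0 \<le> t \<Longrightarrow> 1 \<le> poly p t"
    and ge_linear: "\<And>t. -1 \<le> t \<Longrightarrow> t \<le> 0 \<Longrightarrow> 1 + t * B \<le> poly p t"
    and root: "poly p lam = 0" and largest: "\<forall>x. poly p x = 0 \<longrightarrow> x \<le> lam"
  shows "a / B \<le> poly (pderiv p) lam"
proof -
  define \<delta> where "\<delta> = 1 / (2 * B)"
  have "0 < \<delta>" "\<delta> \<le> 1 / 2" "\<delta> * B = 1 / 2"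
    using \<open>1 \<le> B\<close> by (auto simp: \<delta>_def field_simps)
  have near_0: "1 / 2 \<le> poly p t" if "-\<delta> \<le> t" "t \<le> 0" for t
  proof -
    have "-\<delta> * B \<le> t * B" using that \<open>1 \<le> B\<close> by (intro mult_right_mono) auto
    then show ?thesis using ge_linear[of t] that \<open>\<delta> \<le> 1 / 2\<close> \<open>\<delta> * B = 1 / 2\<close> by simp
  qed
  have "lam < -\<delta>"
  proof (rule ccontr)
    assume "\<not> lam < -\<delta>"
    then have "0 < poly p lam" using ge_1[of lam] near_0[of lam] by (cases "lam \<le> 0") auto
    with root show False by simp
  qed
  have pos: "\<forall>t>lam. 0 < poly p t"
    using poly_pos_beyond_largest_root[OF largest, of 0] ge_1[of 0] \<open>lam < -\<delta>\<close> \<open>0 < \<delta>\<close> by auto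
  have "0 \<le> poly (pderiv p) lam"
    using has_real_derivative_nonneg_at_root[OF poly_DERIV root pos] .
  have "F lam \<le> F (-\<delta>)"
  proof (rule DERIV_nonneg_imp_nondecreasing[of lam "-\<delta>" F])
    fix x assume "lam \<le> x" "x \<le> -\<delta>"
    then have "0 \<le> poly p x" using pos root by (cases "x = lam") (auto intro: less_imp_le)
    then show "\<exists>y. (F has_real_derivative y) (at x) \<and> 0 \<le> y" using F_deriv by blast
  qed (use \<open>lam < -\<delta>\<close> in simp)
  also have "F (-\<delta>) \<le> -\<delta> / 2"
  proof -
    have "F (-\<delta>) - (-\<delta>) / 2 \<le> F 0 - 0 / 2"
    proof (rule DERIV_nonneg_imp_nondecreasing[of "-\<delta>" 0 "\<lambda>x. F x - x / 2"])
      fix x assume "-\<delta> \<le> x" "x \<le> 0"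
      then have "0 \<le> poly p x - 1 / 2" using near_0 by simp
      moreover have "((\<lambda>x. F x - x / 2) has_real_derivative poly p x - 1 / 2) (at x)"
        using F_deriv by (auto intro!: derivative_eq_intros)
      ultimately show "\<exists>y. ((\<lambda>x. F x - x / 2) has_real_derivative y) (at x) \<and> 0 \<le> y" by blast
    qed (use \<open>0 < \<delta>\<close> in simp)
    then show ?thesis using \<open>F 0 = 0\<close> by simp
  qed
  finally have "a * F lam \<le> a * (-\<delta> / 2)"
    using \<open>0 \<le> a\<close> by (rule mult_left_mono)
  then have "a * \<delta> / 2 \<le> - (lam * (lam + 1)) * poly (pderiv p) lam"
    using ode[of lam] root by simp
  also have "\<dots> \<le> 1 / 4 * poly (pderiv p) lam"
  proof (rule mult_right_mono)
    show "- (lam * (lam + 1)) \<le> 1 / 4"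
      using zero_le_power2[of "lam + 1 / 2"] by (simp add: power2_eq_square algebra_simps)
  qed fact
  finally show ?thesis using \<open>\<delta> * B = 1 / 2\<close> \<open>1 \<le> B\<close> by (simp add: \<delta>_def field_simps)
qed

lemma sum_power_ge_const:
  fixes c :: "nat \<Rightarrow> real"
  assumes "\<And>k. 0 \<le> c k" "0 \<le> t"
  shows "c 0 \<le> (\<Sum>k\<le>d. c k * t ^ k)"
  using member_le_sum[of 0 "{..d}" "\<lambda>k. c k * t ^ k"] assms by simp

lemma sum_power_ge_linear:
  fixes c :: "nat \<Rightarrow> real"
  assumes "\<And>k. 0 \<le> c k" "-1 \<le> t" "t \<le> 0"
  shows "c 0 + t * (\<Sum>k\<le>d. c k) \<le> (\<Sum>k\<le>d. c k * t ^ k)"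
proof -
  have "c 0 + t * (\<Sum>k\<le>d. c k) \<le> c 0 * (1 - t) + t * (\<Sum>k\<le>d. c k)"
    using assms mult_nonpos_nonneg[of t "c 0"] by (simp add: algebra_simps)
  also have "\<dots> = (\<Sum>k\<le>d. (if k = 0 then c 0 * (1 - t) else 0) + t * c k)"
    by (simp add: sum.distrib sum_distrib_left)
  also have "\<dots> = (\<Sum>k\<le>d. c k * (if k = 0 then 1 else t))"
    by (intro sum.cong refl) (simp add: algebra_simps)
  also have "\<dots> \<le> (\<Sum>k\<le>d. c k * t ^ k)"
  proof (rule sum_mono)
    fix k
    have "\<bar>t ^ k\<bar> \<le> \<bar>t\<bar>" if "k \<noteq> 0"
      unfolding power_abs using that assms by (intro power_decreasing[of 1 k, simplified]) auto
    then have "(if k = 0 then 1 else t) \<le> t ^ k"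
      using assms by (cases "k = 0") (auto simp: abs_le_iff abs_of_nonpos)
    then show "c k * (if k = 0 then 1 else t) \<le> c k * t ^ k"
      using assms by (intro mult_left_mono)
  qed
  finally show ?thesis .
qed

definition Jcoeff :: "nat \<Rightarrow> nat \<Rightarrow> nat \<Rightarrow> nat" where
  "Jcoeff m d k = (d choose k) * ((m + k) choose k)"

lemma poly_Jpoly:
  assumes "S \<subseteq> {..<n}" "card S = d" "d \<le> n"
  shows "poly (Jpoly n d S) t = (\<Sum>k\<le>d. real (Jcoeff (n - d) d k) * t ^ k)"
proof -
  let ?TT = "{T. T \<subseteq> {..<n} \<and> card T = d}"
  have "finite S" using assms(1) finite_subset by blast
  have "finite ?TT" by (rule finite_subset[of _ "Pow {..<n}"]) auto
  have "poly (Jpoly n d S) t = (\<Sum>T\<in>?TT. \<Prod>i\<in>T. (if i \<in> S then 1 else 0) + t)"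
    unfolding Jpoly_def esym_def by (simp add: poly_sum poly_prod)
  also have "\<dots> = (\<Sum>T\<in>?TT. \<Sum>U | U \<in> Pow S \<and> U \<subseteq> T. t ^ (d - card U))"
    by (intro sum.cong refl) (auto simp: prod_indicator_plus finite_subset intro: arg_cong[where f = "sum _"])
  also have "\<dots> = (\<Sum>U\<in>Pow S. \<Sum>T | T \<in> ?TT \<and> U \<subseteq> T. t ^ (d - card U))"
    using \<open>finite ?TT\<close> \<open>finite S\<close> by (intro sum.swap_restrict) auto
  also have "\<dots> = (\<Sum>U\<in>Pow S. real ((n - card U) choose (d - card U)) * t ^ (d - card U))"
  proof (intro sum.cong refl)
    fix U assume "U \<in> Pow S"
    then have "U \<subseteq> {..<n}" "card U \<le> d"
      using assms \<open>finite S\<close> card_mono by auto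
    then show "(\<Sum>T | T \<in> ?TT \<and> U \<subseteq> T. t ^ (d - card U))
        = real ((n - card U) choose (d - card U)) * t ^ (d - card U)"
      using card_supersets_of_card[of U "{..<n}" d] by simp
  qed
  also have "\<dots> = (\<Sum>j\<le>d. real (d choose j) * (real ((n - j) choose (d - j)) * t ^ (d - j)))"
    using sum_Pow_card[OF \<open>finite S\<close>] assms(2) by simp
  also have "\<dots> = (\<Sum>k\<le>d. real (Jcoeff (n - d) d k) * t ^ k)"
  proof (rule sum.reindex_bij_witness[of _ "\<lambda>k. d - k" "\<lambda>j. d - j"])
    fix j assume "j \<in> {..d}"
    then have "d choose (d - j) = d choose j" "n - d + (d - j) = n - j" "d - (d - j) = j"
      using assms(3) by (auto simp: binomial_symmetric[symmetric])
    then show "real (Jcoeff (n - d) d (d - j)) * t ^ (d - j)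
        = real (d choose j) * (real ((n - j) choose (d - j)) * t ^ (d - j))"
      by (simp add: Jcoeff_def)
  qed auto
  finally show ?thesis .
qed

lemma poly_pderiv_Jpoly:
  assumes "S \<subseteq> {..<n}" "card S = d" "d \<le> n"
  shows "poly (pderiv (Jpoly n d S)) t = (\<Sum>k\<le>d. Jcoeff (n - d) d k * (real k * t ^ (k - 1)))"
proof (rule DERIV_unique)
  show "(poly (Jpoly n d S) has_real_derivative poly (pderiv (Jpoly n d S)) t) (at t)"
    by (rule poly_DERIV)
  show "(poly (Jpoly n d S) has_real_derivative
      (\<Sum>k\<le>d. Jcoeff (n - d) d k * (real k * t ^ (k - 1)))) (at t)"
    unfolding poly_Jpoly[OF assms, abs_def] by (auto intro!: derivative_eq_intros sum.cong)
qed

lemma Jcoeff_0 [simp]: "Jcoeff m d 0 = 1"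
  by (simp add: Jcoeff_def)

lemma Jcoeff_Suc:
  "(k + 1) * (k + 1) * Jcoeff m d (k + 1) = (d - k) * (m + k + 1) * Jcoeff m d k"
proof -
  have "(k + 1) * (d choose (k + 1)) = (d - k) * (d choose k)"
    using binomial_absorption[of k d] binomial_absorb_comp[of d k] by simp
  moreover have "(k + 1) * ((m + (k + 1)) choose (k + 1)) = (m + k + 1) * ((m + k) choose k)"
    using Suc_times_binomial[of k "m + k"] by simp
  ultimately show ?thesis
    unfolding Jcoeff_def by (metis (no_types, lifting) mult.assoc mult.left_commute)
qed

lemma Jcoeff_ode_coeff:
  assumes "k \<le> d"
  shows "real k * Jcoeff m d k + real (k + 1) * Jcoeff m d (k + 1) + (real m - real d) * Jcoeff m d k
    = (real d + 1) * real m * (Jcoeff m d k / real (k + 1))"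
proof -
  define x y where "x = real (Jcoeff m d k)" and "y = real (Jcoeff m d (k + 1))"
  have rec: "real (k + 1) * real (k + 1) * y = (real d - real k) * (real m + real k + 1) * x"
    using arg_cong[OF Jcoeff_Suc, of real k m d] unfolding x_def y_def
    by (simp only: of_nat_mult of_nat_add of_nat_diff[OF assms] of_nat_1)
  have "real (k + 1) * (real k * x + real (k + 1) * y + (real m - real d) * x)
      = real (k + 1) * real k * x + real (k + 1) * real (k + 1) * y + real (k + 1) * (real m - real d) * x"
    by (simp add: algebra_simps)
  also have "\<dots> = (real d + 1) * real m * x"
    unfolding rec by (simp add: algebra_simps)
  finally show ?thesis
    unfolding x_def[symmetric] y_def[symmetric] by (simp add: field_simps del: of_nat_Suc of_nat_add)
qed

definition Jprimitive :: "nat \<Rightarrow> nat \<Rightarrow> real \<Rightarrow> real" where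
  "Jprimitive m d t = (\<Sum>k\<le>d. Jcoeff m d k / real (k + 1) * t ^ Suc k)"

lemma Jcoeff_ode:
  fixes t :: real
  shows "t * (t + 1) * (\<Sum>k\<le>d. Jcoeff m d k * (real k * t ^ (k - 1)))
      + (real m - real d) * t * (\<Sum>k\<le>d. Jcoeff m d k * t ^ k)
    = (real d + 1) * real m * Jprimitive m d t"
proof -
  let ?c = "\<lambda>k. real (Jcoeff m d k)"
  let ?f' = "\<Sum>k\<le>d. ?c k * (real k * t ^ (k - 1))"
  let ?A = "\<Sum>k\<le>d. real k * ?c k * t ^ k"
  have "t * ?f' = ?A"
    unfolding sum_distrib_left by (intro sum.cong refl) (simp add: power_eq_if)
  have shift: "?A = (\<Sum>k\<le>d. real (k + 1) * ?c (k + 1) * t ^ Suc k)"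
  proof -
    have "?A = (\<Sum>k\<le>Suc d. real k * ?c k * t ^ k)"
      by (simp add: Jcoeff_def)
    then show ?thesis by (subst (asm) sum.atMost_Suc_shift) simp
  qed
  have "t * ?A = (\<Sum>k\<le>d. real k * ?c k * t ^ Suc k)"
    by (simp add: sum_distrib_left ac_simps)
  have "t * (t + 1) * ?f' = t * (t * ?f') + t * ?f'"
    by (simp add: algebra_simps)
  also have "\<dots> = (\<Sum>k\<le>d. real k * ?c k * t ^ Suc k) + (\<Sum>k\<le>d. real (k + 1) * ?c (k + 1) * t ^ Suc k)"
    unfolding \<open>t * ?f' = ?A\<close> \<open>t * ?A = _\<close> using shift by simp
  finally have derivative_part: "t * (t + 1) * ?f' = \<dots>" .
  have "(real m - real d) * t * (\<Sum>k\<le>d. ?c k * t ^ k) = (\<Sum>k\<le>d. (real m - real d) * ?c k * t ^ Suc k)"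
    by (simp add: sum_distrib_left ac_simps)
  then have "t * (t + 1) * ?f' + (real m - real d) * t * (\<Sum>k\<le>d. ?c k * t ^ k)
    = (\<Sum>k\<le>d. (real k * ?c k + real (k + 1) * ?c (k + 1) + (real m - real d) * ?c k) * t ^ Suc k)"
    unfolding derivative_part by (simp add: sum.distrib[symmetric] algebra_simps)
  also have "\<dots> = (\<Sum>k\<le>d. (real d + 1) * real m * (?c k / real (k + 1)) * t ^ Suc k)"
    by (intro sum.cong refl) (simp only: Jcoeff_ode_coeff atMost_iff)
  finally show ?thesis
    by (simp add: Jprimitive_def sum_distrib_left mult.assoc)
qed

lemma has_real_derivative_Jprimitive:
  fixes t :: real
  shows "(Jprimitive m d has_real_derivative (\<Sum>k\<le>d. Jcoeff m d k * t ^ k)) (at t)"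
proof -
  have "(Jprimitive m d has_real_derivative
      (\<Sum>k\<le>d. Jcoeff m d k / real (k + 1) * (real (Suc k) * t ^ (Suc k - Suc 0)))) (at t)"
    unfolding Jprimitive_def[abs_def] by (intro DERIV_sum DERIV_cmult DERIV_pow)
  then show ?thesis by (simp del: of_nat_Suc)
qed

lemma sum_Jcoeff_le:
  assumes "1 \<le> d" "1 \<le> m"
  shows "(\<Sum>k\<le>d. Jcoeff m d k) \<le> (d + 1) * m * (m + d) ^ (d * m)"
proof -
  have "(\<Sum>k\<le>d. Jcoeff m d k) \<le> (\<Sum>k\<le>d. (d choose k) * ((m + d) choose m))"
  proof (rule sum_mono)
    fix k assume "k \<in> {..d}"
    then have "(m + k) choose k = (m + k) choose m"
      by (subst binomial_symmetric) auto
    also have "\<dots> \<le> (m + d) choose m"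
      using \<open>k \<in> {..d}\<close> by (intro binomial_right_mono) simp
    finally have "(m + k) choose k \<le> (m + d) choose m" .
    then show "Jcoeff m d k \<le> (d choose k) * ((m + d) choose m)"
      unfolding Jcoeff_def by (rule mult_left_mono) simp
  qed
  also have "\<dots> = 2 ^ d * ((m + d) choose m)"
    by (simp add: sum_distrib_right[symmetric] choose_row_sum)
  also have "\<dots> \<le> (m + d) ^ d * (m + d) ^ m"
    by (intro mult_mono power_mono binomial_le_pow) (use assms in auto)
  also have "\<dots> = (m + d) * (m + d) ^ (d + m - 1)"
    using assms by (simp add: power_add[symmetric] power_Suc[symmetric])
  also have "\<dots> \<le> (d + 1) * m * (m + d) ^ (d * m)"
  proof (intro mult_mono power_increasing)
    obtain d' m' where "d = Suc d'" "m = Suc m'"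
      using assms by (metis Suc_le_D One_nat_def)
    then show "m + d \<le> (d + 1) * m" "d + m - 1 \<le> d * m"
      by simp_all
  qed (use assms in auto)
  finally show ?thesis .
qed

theorem lemma10:
  fixes n d :: nat and S :: "nat set" and lam :: real
  assumes "1 \<le> d" and "d < n"
    and "S \<subseteq> {..<n}" and "card S = d"
    and "poly (Jpoly n d S) lam = 0"
    and "\<forall>t. poly (Jpoly n d S) t = 0 \<longrightarrow> t \<le> lam"
  shows "poly (pderiv (Jpoly n d S)) lam \<ge> 1 / real n ^ (d * (n - d))"
proof -
  define m where "m = n - d"
  define B where "B = (\<Sum>k\<le>d. real (Jcoeff m d k))"
  have J: "poly (Jpoly n d S) t = (\<Sum>k\<le>d. Jcoeff m d k * t ^ k)"
    "poly (pderiv (Jpoly n d S)) t = (\<Sum>k\<le>d. Jcoeff m d k * (real k * t ^ (k - 1)))" for t :: real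
    using poly_Jpoly[OF assms(3,4)] poly_pderiv_Jpoly[OF assms(3,4)] assms(2) by (simp_all add: m_def)
  have "1 \<le> B"
    using sum_power_ge_const[of "\<lambda>k. real (Jcoeff m d k)" 1 d] by (simp add: B_def)
  have "(real d + 1) * real m / B \<le> poly (pderiv (Jpoly n d S)) lam"
  proof (rule pderiv_at_largest_root_ge[where F = "Jprimitive m d" and c = "real m - real d"])
    show "t * (t + 1) * poly (pderiv (Jpoly n d S)) t + (real m - real d) * t * poly (Jpoly n d S) t
        = (real d + 1) * real m * Jprimitive m d t" for t
      unfolding J by (rule Jcoeff_ode)
    show "1 \<le> poly (Jpoly n d S) t" if "0 \<le> t" for t
      unfolding J using sum_power_ge_const[of "\<lambda>k. real (Jcoeff m d k)" t d] that by simp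
    show "1 + t * B \<le> poly (Jpoly n d S) t" if "-1 \<le> t" "t \<le> 0" for t
      unfolding J B_def using sum_power_ge_linear[of "\<lambda>k. real (Jcoeff m d k)" t d] that by simp
  qed (use assms \<open>1 \<le> B\<close> in \<open>simp_all add: J has_real_derivative_Jprimitive Jprimitive_def\<close>)
  moreover have "1 / real n ^ (d * m) \<le> (real d + 1) * real m / B"
  proof -
    have "B \<le> real ((d + 1) * m * n ^ (d * m))"
      using sum_Jcoeff_le[OF assms(1), of m] assms(2)
      unfolding B_def of_nat_sum[symmetric] of_nat_le_iff by (simp add: m_def)
    then show ?thesis using \<open>1 \<le> B\<close> assms(2) by (simp add: field_simps)
  qed
  ultimately show ?thesis by (simp add: m_def)
qed

end
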